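(* In a type-theoretic fibration category, if $f:A\to B$ and $g:B\to C$ are morphisms such that $gf$ and $g$ are acyclic cofibrations, then $f$ is an acyclic cofibration.
   Context: A type-theoretic fibration category is a category with a terminal object $1$ and a subcategory of morphisms called fibrations, containing all isomorphisms and all morphisms with codomain $1$, such that: all pullbacks of fibrations exist and are fibrations; the dependent product of a fibration along a fibration exists and is a fibration; and every morphism factors as an acyclic cofibration followed by a fibration. An acyclic cofibration is a morphism with the left lifting property with respect to all fibrations. *)

theory Defs
  imports Main
begin

text \<open>A category given by explicit data: objects, arrows, source, target,
  composition (cmp C g f means g after f) and identities.\<close>

record ('o, 'a) cat =
  obj :: "'o set"
  arr :: "'a set"
  src :: "'a \<Rightarrow> 'o"
  tgt :: "'a \<Rightarrow> 'o"
  cmp :: "'a \<Rightarrow> 'a \<Rightarrow> 'a"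
  idt :: "'o \<Rightarrow> 'a"

definition hom :: "('o, 'a, 'b) cat_scheme \<Rightarrow> 'o \<Rightarrow> 'o \<Rightarrow> 'a set" where
  "hom C X Y = {f \<in> arr C. src C f = X \<and> tgt C f = Y}"

definition category :: "('o, 'a, 'b) cat_scheme \<Rightarrow> bool" where
  "category C \<longleftrightarrow>
     (\<forall>f\<in>arr C. src C f \<in> obj C \<and> tgt C f \<in> obj C) \<and>
     (\<forall>X\<in>obj C. idt C X \<in> hom C X X) \<and>
     (\<forall>f\<in>arr C. \<forall>g\<in>arr C. tgt C f = src C g \<longrightarrow>
        cmp C g f \<in> hom C (src C f) (tgt C g)) \<and>
     (\<forall>f\<in>arr C. cmp C (idt C (tgt C f)) f = f \<and> cmp C f (idt C (src C f)) = f) \<and>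
     (\<forall>f\<in>arr C. \<forall>g\<in>arr C. \<forall>h\<in>arr C. tgt C f = src C g \<and> tgt C g = src C h \<longrightarrow>
        cmp C h (cmp C g f) = cmp C (cmp C h g) f)"

definition terminal :: "('o, 'a, 'b) cat_scheme \<Rightarrow> 'o \<Rightarrow> bool" where
  "terminal C T \<longleftrightarrow> T \<in> obj C \<and> (\<forall>X\<in>obj C. \<exists>!t. t \<in> hom C X T)"

definition iso :: "('o, 'a, 'b) cat_scheme \<Rightarrow> 'a \<Rightarrow> bool" where
  "iso C f \<longleftrightarrow> f \<in> arr C \<and>
     (\<exists>g\<in>hom C (tgt C f) (src C f).
        cmp C g f = idt C (src C f) \<and> cmp C f g = idt C (tgt C f))"

definition is_pullback ::
  "('o, 'a, 'b) cat_scheme \<Rightarrow> 'a \<Rightarrow> 'a \<Rightarrow> 'o \<Rightarrow> 'a \<Rightarrow> 'a \<Rightarrow> bool" where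
  "is_pullback C f g P p1 p2 \<longleftrightarrow>
     f \<in> arr C \<and> g \<in> arr C \<and> tgt C f = tgt C g \<and> P \<in> obj C \<and>
     p1 \<in> hom C P (src C f) \<and> p2 \<in> hom C P (src C g) \<and>
     cmp C f p1 = cmp C g p2 \<and>
     (\<forall>Q q1 q2. q1 \<in> hom C Q (src C f) \<and> q2 \<in> hom C Q (src C g) \<and>
        cmp C f q1 = cmp C g q2 \<longrightarrow>
        (\<exists>!u. u \<in> hom C Q P \<and> cmp C p1 u = q1 \<and> cmp C p2 u = q2))"

definition acyclic_cofibration :: "('o, 'a, 'b) cat_scheme \<Rightarrow> 'a set \<Rightarrow> 'a \<Rightarrow> bool" where
  "acyclic_cofibration C Fib i \<longleftrightarrow> i \<in> arr C \<and>
     (\<forall>p\<in>Fib. \<forall>u v. u \<in> hom C (src C i) (src C p) \<and> v \<in> hom C (tgt C i) (tgt C p) \<and>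
        cmp C p u = cmp C v i \<longrightarrow>
        (\<exists>l\<in>hom C (tgt C i) (src C p). cmp C l i = u \<and> cmp C p l = v))"

text \<open>Dependent product of g : A \<rightarrow> B along f : B \<rightarrow> D: an object p : \<Pi> \<rightarrow> D of the
  slice over D together with an evaluation map ev : the pullback of Pi along f \<rightarrow> A over B which is
  universal, i.e. \<Pi> is the value at g of a right adjoint to pullback along f.\<close>

definition dep_prod_fib ::
  "('o, 'a, 'b) cat_scheme \<Rightarrow> 'a set \<Rightarrow> 'a \<Rightarrow> 'a \<Rightarrow> bool" where
  "dep_prod_fib C Fib f g \<longleftrightarrow>
     (\<exists>Pi p P pi1 pi2 ev.
        p \<in> hom C Pi (tgt C f) \<and> p \<in> Fib \<and>
        is_pullback C p f P pi1 pi2 \<and>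
        ev \<in> hom C P (src C g) \<and> cmp C g ev = pi2 \<and>
        (\<forall>X h Q q1 q2 u.
           h \<in> hom C X (tgt C f) \<and> is_pullback C h f Q q1 q2 \<and>
           u \<in> hom C Q (src C g) \<and> cmp C g u = q2 \<longrightarrow>
           (\<exists>!v. v \<in> hom C X Pi \<and> cmp C p v = h \<and>
              (\<forall>w. w \<in> hom C Q P \<and> cmp C pi1 w = cmp C v q1 \<and> cmp C pi2 w = q2
                   \<longrightarrow> cmp C ev w = u))))"

definition tt_fibration_category ::
  "('o, 'a, 'b) cat_scheme \<Rightarrow> 'o \<Rightarrow> 'a set \<Rightarrow> bool" where
  "tt_fibration_category C one Fib \<longleftrightarrow>
     category C \<and> terminal C one \<and>
     \<comment> \<open>fibrations form a subcategory containing all isos and all maps into 1\<close>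
     Fib \<subseteq> arr C \<and>
     (\<forall>f\<in>Fib. \<forall>g\<in>Fib. tgt C f = src C g \<longrightarrow> cmp C g f \<in> Fib) \<and>
     (\<forall>f. iso C f \<longrightarrow> f \<in> Fib) \<and>
     (\<forall>f\<in>arr C. tgt C f = one \<longrightarrow> f \<in> Fib) \<and>
     \<comment> \<open>pullbacks of fibrations exist and are fibrations\<close>
     (\<forall>p\<in>Fib. \<forall>h\<in>arr C. tgt C h = tgt C p \<longrightarrow>
        (\<exists>P q1 q2. is_pullback C p h P q1 q2 \<and> q2 \<in> Fib)) \<and>
     \<comment> \<open>dependent products of fibrations along fibrations exist and are fibrations\<close>
     (\<forall>f\<in>Fib. \<forall>g\<in>Fib. tgt C g = src C f \<longrightarrow> dep_prod_fib C Fib f g) \<and>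
     \<comment> \<open>factorization: acyclic cofibration followed by fibration\<close>
     (\<forall>f\<in>arr C. \<exists>i p. acyclic_cofibration C Fib i \<and> p \<in> Fib \<and>
        tgt C i = src C p \<and> cmp C p i = f)"

end

theory Submission
  imports Defs
begin

text \<open>Lifting the square with sides the identity of B and the fibration B \<rightarrow> 1 against the
  acyclic cofibration g gives a retraction r of g. Then f is a retract of gf in the arrow
  category (via the identity of A and the pair g, r), and maps with the left lifting property
  against a class of arrows are closed under retracts.\<close>

lemma category_comp_in_hom:
  assumes "category C" "f \<in> hom C X Y" "g \<in> hom C Y Z"
  shows "cmp C g f \<in> hom C X Z"
  using assms unfolding category_def hom_def by auto

lemma category_assoc:
  assumes "category C" "f \<in> hom C X Y" "g \<in> hom C Y Z" "h \<in> hom C Z W"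
  shows "cmp C h (cmp C g f) = cmp C (cmp C h g) f"
  using assms unfolding category_def hom_def by auto

lemma category_comp_idt_left:
  assumes "category C" "f \<in> hom C X Y"
  shows "cmp C (idt C Y) f = f"
  using assms unfolding category_def hom_def by auto

lemma category_comp_idt_right:
  assumes "category C" "f \<in> hom C X Y"
  shows "cmp C f (idt C X) = f"
  using assms unfolding category_def hom_def by auto

lemma category_idt_in_hom:
  assumes "category C" "f \<in> hom C X Y"
  shows "idt C X \<in> hom C X X" "idt C Y \<in> hom C Y Y"
  using assms unfolding category_def hom_def by auto

lemma terminal_hom_unique:
  assumes "category C" "terminal C T" "x \<in> hom C X T" "y \<in> hom C X T"
  shows "x = y"
proof -
  have "X \<in> obj C" using assms(1,3) unfolding category_def hom_def by auto
  then show ?thesis using assms(2-4) unfolding terminal_def by blast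
qed

lemma acyclic_cofibration_retract:
  assumes C: "category C" and Fib: "Fib \<subseteq> arr C"
    and i: "acyclic_cofibration C Fib i" "i \<in> hom C A' D'"
    and f: "f \<in> hom C A B"
    and s: "s \<in> hom C A A'" and s': "s' \<in> hom C A' A" and s's: "cmp C s' s = idt C A"
    and t: "t \<in> hom C B D'" and t': "t' \<in> hom C D' B" and t't: "cmp C t' t = idt C B"
    and is_tf: "cmp C i s = cmp C t f" and fs'_t'i: "cmp C f s' = cmp C t' i"
  shows "acyclic_cofibration C Fib f"
  unfolding acyclic_cofibration_def
proof (intro conjI ballI allI impI)
  show "f \<in> arr C" using f by (simp add: hom_def)
next
  fix p u v
  assume p: "p \<in> Fib"
    and "u \<in> hom C (src C f) (src C p) \<and> v \<in> hom C (tgt C f) (tgt C p) \<and>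
      cmp C p u = cmp C v f"
  then have u: "u \<in> hom C A (src C p)" and v: "v \<in> hom C B (tgt C p)"
    and uv: "cmp C p u = cmp C v f"
    using f by (auto simp: hom_def)
  have p_hom: "p \<in> hom C (src C p) (tgt C p)" using p Fib by (auto simp: hom_def)
  have us': "cmp C u s' \<in> hom C A' (src C p)" and vt': "cmp C v t' \<in> hom C D' (tgt C p)"
    using category_comp_in_hom[OF C] s' u t' v by blast+
  have "cmp C p (cmp C u s') = cmp C (cmp C v f) s'"
    using category_assoc[OF C s' u p_hom] uv by simp
  also have "\<dots> = cmp C (cmp C v t') i"
    using category_assoc[OF C s' f v] category_assoc[OF C i(2) t' v] fs'_t'i by simp
  finally obtain l where l: "l \<in> hom C D' (src C p)"
    and li: "cmp C l i = cmp C u s'" and pl: "cmp C p l = cmp C v t'"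
    using i p us' vt' unfolding acyclic_cofibration_def hom_def by force
  show "\<exists>l'\<in>hom C (tgt C f) (src C p). cmp C l' f = u \<and> cmp C p l' = v"
  proof (intro bexI conjI)
    show "cmp C l t \<in> hom C (tgt C f) (src C p)"
      using category_comp_in_hom[OF C t l] f by (simp add: hom_def)
    have "cmp C (cmp C l t) f = cmp C l (cmp C i s)"
      using category_assoc[OF C f t l] category_assoc[OF C s i(2) l] is_tf by simp
    also have "\<dots> = cmp C u (cmp C s' s)"
      using category_assoc[OF C s i(2) l] category_assoc[OF C s s' u] li by simp
    also have "\<dots> = u"
      using category_comp_idt_right[OF C u] s's by simp
    finally show "cmp C (cmp C l t) f = u" .
    have "cmp C p (cmp C l t) = cmp C v (cmp C t' t)"
      using category_assoc[OF C t l p_hom] category_assoc[OF C t t' v] pl by simp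
    then show "cmp C p (cmp C l t) = v"
      using category_comp_idt_right[OF C v] t't by simp
  qed
qed

lemma acyclic_cofibration_fibrant_domain_retraction:
  assumes C: "category C" and one: "terminal C one"
    and tB: "tB \<in> hom C B one" "tB \<in> Fib"
    and g: "acyclic_cofibration C Fib g" "g \<in> hom C B D"
  obtains r where "r \<in> hom C D B" "cmp C r g = idt C B"
proof -
  have "D \<in> obj C" using C g(2) unfolding category_def hom_def by auto
  then obtain tD where tD: "tD \<in> hom C D one" using one unfolding terminal_def by blast
  have idB: "idt C B \<in> hom C B B" using category_idt_in_hom[OF C g(2)] by simp
  have "cmp C tB (idt C B) = cmp C tD g"
    using terminal_hom_unique[OF C one tB(1) category_comp_in_hom[OF C g(2) tD]]
      category_comp_idt_right[OF C tB(1)] by simp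
  then show thesis
    using that g tB idB tD unfolding acyclic_cofibration_def hom_def by force
qed

theorem lemma7p3:
  fixes C :: "('o, 'a, 'b) cat_scheme" and one :: 'o and Fib :: "'a set"
    and f g :: 'a and A B D :: 'o
  assumes "tt_fibration_category C one Fib"
    and "f \<in> hom C A B" and "g \<in> hom C B D"
    and "acyclic_cofibration C Fib (cmp C g f)"
    and "acyclic_cofibration C Fib g"
  shows "acyclic_cofibration C Fib f"
proof -
  have C: "category C" and one: "terminal C one" and Fib: "Fib \<subseteq> arr C"
    and maps_to_one: "\<And>h. h \<in> hom C B one \<Longrightarrow> h \<in> Fib"
    using assms(1) unfolding tt_fibration_category_def hom_def by auto
  have "B \<in> obj C" using C assms(2) unfolding category_def hom_def by auto
  then obtain tB where tB: "tB \<in> hom C B one" using one unfolding terminal_def by blast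
  obtain r where r: "r \<in> hom C D B" "cmp C r g = idt C B"
    using acyclic_cofibration_fibrant_domain_retraction[OF C one tB maps_to_one[OF tB]
        assms(5,3)] .
  have idA: "idt C A \<in> hom C A A" using category_idt_in_hom[OF C assms(2)] by simp
  show ?thesis
  proof (rule acyclic_cofibration_retract[OF C Fib assms(4) _ assms(2) idA idA _ assms(3) r])
    show "cmp C g f \<in> hom C A D" using category_comp_in_hom[OF C assms(2,3)] .
    show "cmp C (idt C A) (idt C A) = idt C A" using category_comp_idt_left[OF C idA] .
    show "cmp C (cmp C g f) (idt C A) = cmp C g f"
      using category_comp_idt_right[OF C category_comp_in_hom[OF C assms(2,3)]] .
    show "cmp C f (idt C A) = cmp C r (cmp C g f)"
      using category_comp_idt_right[OF C assms(2)] category_assoc[OF C assms(2,3) r(1)]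
        category_comp_idt_left[OF C assms(2)] r(2) by simp
  qed
qed

end
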